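(* In a symmetric instance with $k$ signals ($2\le k\le n$), a symmetric scheme $\varphi$ is persuasive if and only if $u_{\mathcal R}(\varphi)\ge\rho_E$, where $u_{\mathcal R}(\varphi)$ is the receiver's expected utility when she follows the recommendations of $\varphi$.
   Context: Model: a receiver chooses one of the actions $[n]$; each action $i$ has a type $\theta_i$; the state $\boldsymbol\theta=(\theta_1,\dots,\theta_n)$ is drawn from a commonly known distribution $q$ over a finite set of type vectors; each type $t$ has receiver value $\rho(t)$ and sender value $\xi(t)$. A direct scheme with $k$ signals maps each state to a distribution over $k$ signals, each signal recommending an action; it is persuasive if for every signal $\sigma$ sent with positive probability and recommending $i$, $\mathbb E[\rho(\theta_i)\mid\sigma]\ge\mathbb E[\rho(\theta_j)\mid\sigma]$ for all $j\in[n]$. $\rho_E=\max_i\sum_{\boldsymbol\theta}q_{\boldsymbol\theta}\rho(\theta_i)$. Symmetric instance: $q_{\boldsymbol\theta}=q_{\boldsymbol\theta'}$ whenever $\boldsymbol\theta'$ is a permutation of $\boldsymbol\theta$. For a permutation $\pi$ of $[n]$ let $(\pi\cdot\boldsymbol\theta)_{\pi(l)}=\theta_l$. A symmetric scheme is a direct scheme with $k$ signals whose signals recommend the distinct actions $1,\dots,k$ and which satisfies $\varphi(\pi\cdot\boldsymbol\theta,\pi(i))=\varphi(\boldsymbol\theta,i)$ for every state $\boldsymbol\theta$, every $i\in[k]$ and every permutation $\pi$ of $[n]$ with $\pi([k])=[k]$ (here $\varphi(\boldsymbol\theta,i)$ is the probability of recommending $i$ in state $\boldsymbol\theta$). *)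

theory Defs
  imports "HOL-Probability.Probability_Mass_Function" "HOL-Combinatorics.Permutations"
begin

(* Actions are 0..<n (instead of 1..n); a state is a list of n types,
   state ! i = type of action i.  The prior q is a pmf over states. *)

definition perm_act :: "(nat \<Rightarrow> nat) \<Rightarrow> 'a list \<Rightarrow> 'a list" where
  "perm_act \<pi> \<theta> = map (\<lambda>j. \<theta> ! inv \<pi> j) [0..<length \<theta>]"

definition valid_prior :: "nat \<Rightarrow> 'a list pmf \<Rightarrow> bool" where
  "valid_prior n q \<longleftrightarrow> finite (set_pmf q) \<and> (\<forall>\<theta>\<in>set_pmf q. length \<theta> = n)"

definition symmetric_instance :: "nat \<Rightarrow> 'a list pmf \<Rightarrow> bool" where
  "symmetric_instance n q \<longleftrightarrow>
     (\<forall>\<theta> \<pi>. length \<theta> = n \<longrightarrow> \<pi> permutes {..<n} \<longrightarrow> pmf q (perm_act \<pi> \<theta>) = pmf q \<theta>)"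

(* A scheme with k signals whose signal i (i<k) recommends action i:
   phi \<theta> i = probability of sending signal i (recommending action i) in state \<theta>. *)
definition scheme_k :: "nat \<Rightarrow> nat \<Rightarrow> ('a list \<Rightarrow> nat \<Rightarrow> real) \<Rightarrow> bool" where
  "scheme_k n k \<phi> \<longleftrightarrow>
     (\<forall>\<theta>. length \<theta> = n \<longrightarrow> (\<forall>i<k. \<phi> \<theta> i \<ge> 0) \<and> (\<Sum>i<k. \<phi> \<theta> i) = 1)"

definition symmetric_scheme :: "nat \<Rightarrow> nat \<Rightarrow> ('a list \<Rightarrow> nat \<Rightarrow> real) \<Rightarrow> bool" where
  "symmetric_scheme n k \<phi> \<longleftrightarrow> scheme_k n k \<phi> \<and>
     (\<forall>\<theta> i \<pi>. length \<theta> = n \<longrightarrow> i < k \<longrightarrow> \<pi> permutes {..<n} \<longrightarrow> \<pi> ` {..<k} = {..<k} \<longrightarrow>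
        \<phi> (perm_act \<pi> \<theta>) (\<pi> i) = \<phi> \<theta> i)"

definition sig_prob :: "'a list pmf \<Rightarrow> ('a list \<Rightarrow> nat \<Rightarrow> real) \<Rightarrow> nat \<Rightarrow> real" where
  "sig_prob q \<phi> s = (\<Sum>\<theta>\<in>set_pmf q. pmf q \<theta> * \<phi> \<theta> s)"

definition cond_exp :: "'a list pmf \<Rightarrow> ('a \<Rightarrow> real) \<Rightarrow> ('a list \<Rightarrow> nat \<Rightarrow> real) \<Rightarrow> nat \<Rightarrow> nat \<Rightarrow> real" where
  "cond_exp q \<rho> \<phi> s j = (\<Sum>\<theta>\<in>set_pmf q. pmf q \<theta> * \<phi> \<theta> s * \<rho> (\<theta> ! j)) / sig_prob q \<phi> s"

definition persuasive :: "nat \<Rightarrow> nat \<Rightarrow> 'a list pmf \<Rightarrow> ('a \<Rightarrow> real) \<Rightarrow> ('a list \<Rightarrow> nat \<Rightarrow> real) \<Rightarrow> bool" where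
  "persuasive n k q \<rho> \<phi> \<longleftrightarrow>
     (\<forall>i<k. sig_prob q \<phi> i > 0 \<longrightarrow> (\<forall>j<n. cond_exp q \<rho> \<phi> i i \<ge> cond_exp q \<rho> \<phi> i j))"

definition receiver_utility :: "nat \<Rightarrow> 'a list pmf \<Rightarrow> ('a \<Rightarrow> real) \<Rightarrow> ('a list \<Rightarrow> nat \<Rightarrow> real) \<Rightarrow> real" where
  "receiver_utility k q \<rho> \<phi> = (\<Sum>\<theta>\<in>set_pmf q. pmf q \<theta> * (\<Sum>i<k. \<phi> \<theta> i * \<rho> (\<theta> ! i)))"

definition rho_E :: "nat \<Rightarrow> 'a list pmf \<Rightarrow> ('a \<Rightarrow> real) \<Rightarrow> real" where
  "rho_E n q \<rho> = Max ((\<lambda>i. \<Sum>\<theta>\<in>set_pmf q. pmf q \<theta> * \<rho> (\<theta> ! i)) ` {..<n})"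

end

theory Submission
  imports Defs
begin

text \<open>Write \<open>M i j\<close> (\<open>sig_payoff\<close>) for the prior-weighted payoff of action \<open>j\<close>
jointly with signal \<open>i\<close>, so that \<open>E[\<rho>(\<theta>\<^sub>j) | i] = M i j / P(i)\<close>. Symmetry of prior
and scheme under the permutations of \<open>[n]\<close> fixing \<open>[k]\<close> forces \<open>P(i) = 1/k\<close>, a constant
diagonal \<open>M i i = a\<close>, and in each column \<open>j\<close> equal entries off the diagonal; all column
sums equal the prior mean \<open>\<rho>\<^sub>E\<close>. A column \<open>j \<ge> k\<close> thus has entries \<open>\<rho>\<^sub>E / k\<close>,
a column \<open>j < k\<close> has off-diagonal entries \<open>(\<rho>\<^sub>E - a) / (k - 1)\<close>, and either is at
most \<open>a\<close> iff \<open>\<rho>\<^sub>E \<le> k a\<close>, where \<open>k a\<close> is the receiver's utility.\<close>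

definition sig_payoff :: "'a list pmf \<Rightarrow> ('a \<Rightarrow> real) \<Rightarrow> ('a list \<Rightarrow> nat \<Rightarrow> real) \<Rightarrow> nat \<Rightarrow> nat \<Rightarrow> real" where
  "sig_payoff q \<rho> \<phi> s j = (\<Sum>\<theta>\<in>set_pmf q. pmf q \<theta> * \<phi> \<theta> s * \<rho> (\<theta> ! j))"

definition prior_payoff :: "'a list pmf \<Rightarrow> ('a \<Rightarrow> real) \<Rightarrow> nat \<Rightarrow> real" where
  "prior_payoff q \<rho> j = (\<Sum>\<theta>\<in>set_pmf q. pmf q \<theta> * \<rho> (\<theta> ! j))"

lemma perm_act_length [simp]: "length (perm_act \<pi> \<theta>) = length \<theta>"
  by (simp add: perm_act_def)

lemma perm_act_nth: "j < length \<theta> \<Longrightarrow> perm_act \<pi> \<theta> ! j = \<theta> ! inv \<pi> j"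
  by (simp add: perm_act_def)

lemma perm_act_nth_image:
  assumes "\<pi> permutes {..<length \<theta>}" "j < length \<theta>"
  shows "perm_act \<pi> \<theta> ! \<pi> j = \<theta> ! j"
proof -
  have "\<pi> j < length \<theta>" using assms permutes_in_image by fastforce
  then show ?thesis using assms by (simp add: perm_act_nth permutes_inverses)
qed

lemma perm_act_inv_perm_act:
  assumes "\<pi> permutes {..<length \<theta>}"
  shows "perm_act (inv \<pi>) (perm_act \<pi> \<theta>) = \<theta>"
  by (rule nth_equalityI)
     (use assms in \<open>auto simp: perm_act_nth permutes_inv_inv perm_act_nth_image\<close>)

lemma bij_betw_perm_act_set_pmf:
  assumes vp: "valid_prior n q" and si: "symmetric_instance n q" and \<pi>: "\<pi> permutes {..<n}"
  shows "bij_betw (perm_act \<pi>) (set_pmf q) (set_pmf q)"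
proof (rule bij_betw_byWitness[where f' = "perm_act (inv \<pi>)"])
  have len: "length \<theta> = n" if "\<theta> \<in> set_pmf q" for \<theta>
    using vp that unfolding valid_prior_def by blast
  have inv\<pi>: "inv \<pi> permutes {..<n}" using \<pi> by (rule permutes_inv)
  show "\<forall>\<theta>\<in>set_pmf q. perm_act (inv \<pi>) (perm_act \<pi> \<theta>) = \<theta>"
    using len \<pi> perm_act_inv_perm_act by metis
  show "\<forall>\<theta>\<in>set_pmf q. perm_act \<pi> (perm_act (inv \<pi>) \<theta>) = \<theta>"
    using len inv\<pi> \<pi> perm_act_inv_perm_act[of "inv \<pi>"] permutes_inv_inv by metis
  show "perm_act \<pi> ` set_pmf q \<subseteq> set_pmf q" "perm_act (inv \<pi>) ` set_pmf q \<subseteq> set_pmf q"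
    using len si \<pi> inv\<pi> unfolding symmetric_instance_def by (auto simp: set_pmf_iff)
qed

lemma sum_pmf_perm_act:
  assumes vp: "valid_prior n q" and si: "symmetric_instance n q" and \<pi>: "\<pi> permutes {..<n}"
  shows "(\<Sum>\<theta>\<in>set_pmf q. pmf q \<theta> * f (perm_act \<pi> \<theta>)) = (\<Sum>\<theta>\<in>set_pmf q. pmf q \<theta> * f \<theta>)"
proof -
  have "(\<Sum>\<theta>\<in>set_pmf q. pmf q \<theta> * f (perm_act \<pi> \<theta>))
      = (\<Sum>\<theta>\<in>set_pmf q. pmf q (perm_act \<pi> \<theta>) * f (perm_act \<pi> \<theta>))"
    using vp si \<pi> unfolding valid_prior_def symmetric_instance_def by (intro sum.cong) auto
  also have "\<dots> = (\<Sum>\<theta>\<in>set_pmf q. pmf q \<theta> * f \<theta>)"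
    using sum.reindex_bij_betw[OF bij_betw_perm_act_set_pmf[OF vp si \<pi>]] .
  finally show ?thesis .
qed

lemma receiver_utility_eq_sum_sig_payoff:
  "receiver_utility k q \<rho> \<phi> = (\<Sum>i<k. sig_payoff q \<rho> \<phi> i i)"
  unfolding receiver_utility_def sig_payoff_def
  by (subst sum.swap) (simp add: sum_distrib_left mult.assoc)

lemma persuasive_iff_sig_payoff_le:
  assumes "\<forall>i<k. sig_prob q \<phi> i > 0"
  shows "persuasive n k q \<rho> \<phi> \<longleftrightarrow> (\<forall>i<k. \<forall>j<n. sig_payoff q \<rho> \<phi> i j \<le> sig_payoff q \<rho> \<phi> i i)"
  using assms unfolding persuasive_def cond_exp_def sig_payoff_def[symmetric]
  by (auto simp: divide_le_cancel)

lemma diagonal_dominant_iff_column_sum_le: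
  fixes M :: "nat \<Rightarrow> nat \<Rightarrow> real"
  assumes "2 \<le> k" "k \<le> n"
    and diag: "\<And>i. i < k \<Longrightarrow> M i i = a"
    and off_diag: "\<And>l i j. l < k \<Longrightarrow> i < k \<Longrightarrow> j < n \<Longrightarrow> l \<noteq> j \<Longrightarrow> i \<noteq> j \<Longrightarrow> M l j = M i j"
    and column: "\<And>j. j < n \<Longrightarrow> (\<Sum>l<k. M l j) = \<mu>"
  shows "(\<forall>i<k. \<forall>j<n. M i j \<le> M i i) \<longleftrightarrow> \<mu> \<le> k * a"
proof -
  have inner_column: "\<mu> = a + (real k - 1) * M i j" if "i < k" "j < k" "i \<noteq> j" for i j
  proof -
    have "(\<Sum>l<k. M l j) = M j j + (\<Sum>l\<in>{..<k} - {j}. M l j)"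
      using that by (intro sum.remove) auto
    also have "(\<Sum>l\<in>{..<k} - {j}. M l j) = (\<Sum>l\<in>{..<k} - {j}. M i j)"
      using that \<open>k \<le> n\<close> by (intro sum.cong refl off_diag) auto
    finally show ?thesis
      using that \<open>k \<le> n\<close> column[of j] diag[of j] by (simp add: of_nat_diff)
  qed
  have outer_column: "\<mu> = k * M i j" if "i < k" "k \<le> j" "j < n" for i j
  proof -
    have "(\<Sum>l<k. M l j) = (\<Sum>l<k. M i j)"
      using that by (intro sum.cong refl off_diag) auto
    then show ?thesis using column[of j] that by simp
  qed
  have k1: "real k - 1 > 0" using \<open>2 \<le> k\<close> by simp
  show ?thesis
  proof
    assume "\<forall>i<k. \<forall>j<n. M i j \<le> M i i"
    then have "M 1 0 \<le> a" using diag[of 1] \<open>2 \<le> k\<close> \<open>k \<le> n\<close> by auto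
    then show "\<mu> \<le> k * a"
      using inner_column[of 1 0] \<open>2 \<le> k\<close> k1 mult_left_mono[of "M 1 0" a "real k - 1"]
      by (simp add: algebra_simps)
  next
    assume le: "\<mu> \<le> k * a"
    have "M i j \<le> a" if "i < k" "j < n" "i \<noteq> j" for i j
    proof (cases "j < k")
      case True
      have "(real k - 1) * M i j \<le> (real k - 1) * a"
        using inner_column[OF \<open>i < k\<close> True \<open>i \<noteq> j\<close>] le by (simp add: algebra_simps)
      then show ?thesis using k1 by (simp add: mult_le_cancel_left_pos)
    next
      case False
      then show ?thesis using outer_column[of i j] that le \<open>2 \<le> k\<close> by simp
    qed
    then show "\<forall>i<k. \<forall>j<n. M i j \<le> M i i" using diag by fastforce
  qed
qed

locale symmetric_signalling =
  fixes n k :: nat and q :: "'a list pmf" and \<phi> :: "'a list \<Rightarrow> nat \<Rightarrow> real"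
  assumes prior: "valid_prior n q" and symmetric_prior: "symmetric_instance n q"
    and k_le_n: "k \<le> n" and scheme: "symmetric_scheme n k \<phi>"
begin

lemma length_state: "\<theta> \<in> set_pmf q \<Longrightarrow> length \<theta> = n"
  using prior unfolding valid_prior_def by blast

lemma sum_scheme: "\<theta> \<in> set_pmf q \<Longrightarrow> (\<Sum>i<k. \<phi> \<theta> i) = 1"
  using scheme length_state unfolding symmetric_scheme_def scheme_k_def by blast

lemma scheme_perm:
  "\<lbrakk>length \<theta> = n; i < k; \<pi> permutes {..<n}; \<pi> ` {..<k} = {..<k}\<rbrakk>
    \<Longrightarrow> \<phi> (perm_act \<pi> \<theta>) (\<pi> i) = \<phi> \<theta> i"
  using scheme unfolding symmetric_scheme_def by blast

lemma transpose_permutes: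
  assumes "a < k" "b < k"
  shows "Transposition.transpose a b permutes {..<n}" "Transposition.transpose a b ` {..<k} = {..<k}"
proof -
  show "Transposition.transpose a b permutes {..<n}" using assms k_le_n by (intro permutes_swap_id) auto
  have "Transposition.transpose a b permutes {..<k}" using assms by (intro permutes_swap_id) auto
  then show "Transposition.transpose a b ` {..<k} = {..<k}" by (rule permutes_image)
qed

lemma sig_prob_perm:
  assumes "\<pi> permutes {..<n}" "\<pi> ` {..<k} = {..<k}" "i < k"
  shows "sig_prob q \<phi> (\<pi> i) = sig_prob q \<phi> i"
  unfolding sig_prob_def
  using sum_pmf_perm_act[OF prior symmetric_prior assms(1), of "\<lambda>\<theta>. \<phi> \<theta> (\<pi> i)"]
  by (simp add: assms scheme_perm length_state cong: sum.cong)

lemma sig_payoff_perm: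
  assumes "\<pi> permutes {..<n}" "\<pi> ` {..<k} = {..<k}" "i < k" "j < n"
  shows "sig_payoff q \<rho> \<phi> (\<pi> i) (\<pi> j) = sig_payoff q \<rho> \<phi> i j"
  unfolding sig_payoff_def
  using sum_pmf_perm_act[OF prior symmetric_prior assms(1), of "\<lambda>\<theta>. \<phi> \<theta> (\<pi> i) * \<rho> (\<theta> ! \<pi> j)"]
  by (simp add: assms scheme_perm length_state perm_act_nth_image mult.assoc cong: sum.cong)

lemma prior_payoff_perm:
  assumes "\<pi> permutes {..<n}" "j < n"
  shows "prior_payoff q \<rho> (\<pi> j) = prior_payoff q \<rho> j"
  unfolding prior_payoff_def
  using sum_pmf_perm_act[OF prior symmetric_prior assms(1), of "\<lambda>\<theta>. \<rho> (\<theta> ! \<pi> j)"]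
  by (simp add: assms length_state perm_act_nth_image cong: sum.cong)

lemma sig_prob_eq:
  assumes "i < k"
  shows "sig_prob q \<phi> i = 1 / k"
proof -
  have same: "sig_prob q \<phi> l = sig_prob q \<phi> 0" if "l < k" for l
    using sig_prob_perm[OF transpose_permutes[of 0 l], of 0] that by simp
  have "(\<Sum>l<k. sig_prob q \<phi> l) = (\<Sum>\<theta>\<in>set_pmf q. pmf q \<theta> * (\<Sum>l<k. \<phi> \<theta> l))"
    unfolding sig_prob_def by (subst sum.swap) (simp add: sum_distrib_left)
  also have "\<dots> = 1"
    using prior unfolding valid_prior_def by (simp add: sum_scheme sum_pmf_eq_1 cong: sum.cong)
  finally have "(\<Sum>l<k. sig_prob q \<phi> 0) = 1"
    using same by (metis (no_types, lifting) lessThan_iff sum.cong)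
  then have "k * sig_prob q \<phi> 0 = 1" by simp
  then show ?thesis using same[OF assms] assms by (simp add: eq_divide_eq mult.commute)
qed

lemma sum_sig_payoff: "(\<Sum>i<k. sig_payoff q \<rho> \<phi> i j) = prior_payoff q \<rho> j"
proof -
  have "(\<Sum>i<k. sig_payoff q \<rho> \<phi> i j)
      = (\<Sum>\<theta>\<in>set_pmf q. pmf q \<theta> * (\<Sum>i<k. \<phi> \<theta> i) * \<rho> (\<theta> ! j))"
    unfolding sig_payoff_def by (subst sum.swap) (simp add: sum_distrib_left sum_distrib_right)
  then show ?thesis unfolding prior_payoff_def by (simp add: sum_scheme cong: sum.cong)
qed

lemma sig_payoff_diag: "i < k \<Longrightarrow> sig_payoff q \<rho> \<phi> i i = sig_payoff q \<rho> \<phi> 0 0"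
  using sig_payoff_perm[OF transpose_permutes[of 0 i], of 0 0] k_le_n by simp

lemma sig_payoff_off_diag:
  assumes "l < k" "i < k" "j < n" "l \<noteq> j" "i \<noteq> j"
  shows "sig_payoff q \<rho> \<phi> l j = sig_payoff q \<rho> \<phi> i j"
  using sig_payoff_perm[OF transpose_permutes[of l i] \<open>l < k\<close> \<open>j < n\<close>] assms by simp

lemma receiver_utility_eq: "receiver_utility k q \<rho> \<phi> = k * sig_payoff q \<rho> \<phi> 0 0"
proof -
  have "(\<Sum>i<k. sig_payoff q \<rho> \<phi> i i) = (\<Sum>i<k. sig_payoff q \<rho> \<phi> 0 0)"
    by (rule sum.cong[OF refl sig_payoff_diag]) simp
  then show ?thesis by (simp add: receiver_utility_eq_sum_sig_payoff)
qed

lemma prior_payoff_eq: "j < n \<Longrightarrow> prior_payoff q \<rho> j = prior_payoff q \<rho> 0"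
  using prior_payoff_perm[OF permutes_swap_id[of 0 "{..<n}" j], of 0] by auto

lemma rho_E_eq:
  assumes "0 < n"
  shows "rho_E n q \<rho> = prior_payoff q \<rho> 0"
proof -
  have "prior_payoff q \<rho> ` {..<n} = (\<lambda>_. prior_payoff q \<rho> 0) ` {..<n}"
    by (rule image_cong[OF refl prior_payoff_eq]) simp
  also have "\<dots> = {prior_payoff q \<rho> 0}" using assms by auto
  finally have "prior_payoff q \<rho> ` {..<n} = {prior_payoff q \<rho> 0}" .
  then show ?thesis unfolding rho_E_def prior_payoff_def[abs_def] by simp
qed

end

theorem lemma3p3:
  fixes n k :: nat and q :: "'a list pmf" and \<rho> \<xi> :: "'a \<Rightarrow> real"
    and \<phi> :: "'a list \<Rightarrow> nat \<Rightarrow> real"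
  assumes "valid_prior n q" and "symmetric_instance n q"
    and "2 \<le> k" and "k \<le> n"
    and "symmetric_scheme n k \<phi>"
  shows "persuasive n k q \<rho> \<phi> \<longleftrightarrow> receiver_utility k q \<rho> \<phi> \<ge> rho_E n q \<rho>"
proof -
  interpret symmetric_signalling n k q \<phi>
    using assms by unfold_locales
  have "persuasive n k q \<rho> \<phi> \<longleftrightarrow> (\<forall>i<k. \<forall>j<n. sig_payoff q \<rho> \<phi> i j \<le> sig_payoff q \<rho> \<phi> i i)"
    using \<open>2 \<le> k\<close> by (intro persuasive_iff_sig_payoff_le) (simp add: sig_prob_eq)
  also have "\<dots> \<longleftrightarrow> prior_payoff q \<rho> 0 \<le> k * sig_payoff q \<rho> \<phi> 0 0"
    using sum_sig_payoff prior_payoff_eq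
    by (intro diagonal_dominant_iff_column_sum_le[OF assms(3,4) sig_payoff_diag sig_payoff_off_diag])
       metis+
  also have "\<dots> \<longleftrightarrow> receiver_utility k q \<rho> \<phi> \<ge> rho_E n q \<rho>"
    using assms(3,4) by (simp add: receiver_utility_eq rho_E_eq)
  finally show ?thesis .
qed

end
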